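(* Let $G$ be a finite simple undirected connected graph, and let $c:V(G)\to \mathbb{R}_{>0}$ and $\kappa:V(G)\to \mathbb{Z}$ be functions such that $0\leq \kappa(u)\leq d_G(u)$ for every vertex $u$ of $G$. Then $$\alpha(G,c,\kappa) = \sum_{u\in V(G)} \frac{c(u)(\kappa(u)+1)}{d_G(u)+1}$$ holds if and only if either (i) $\kappa(u)=d_G(u)$ for every vertex $u$ of $G$, or (ii) $G$ is a clique (complete graph) and both $c$ and $\kappa$ are constant on $V(G)$.
   Context: $d_G(u)$ denotes the degree of $u$ in $G$, and $[n]=\{1,\dots,n\}$. For a set $I\subseteq V(G)$, its $c$-weight is $c(I)=\sum_{u\in I}c(u)$. A set $I\subseteq V(G)$ is called $\kappa$-degenerate in $G$ if there is a linear ordering $u_1,\ldots,u_k$ of the vertices of $I$ such that for every $i\in[k]$, $u_i$ has at most $\kappa(u_i)$ neighbors in $\{u_j: j\in[i-1]\}$. $\alpha(G,c,\kappa)$ denotes the maximum $c$-weight of a $\kappa$-degenerate set of vertices of $G$. (It is known that always $\alpha(G,c,\kappa)\geq \sum_{u\in V(G)} \frac{c(u)(\kappa(u)+1)}{d_G(u)+1}$.) *)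

theory Defs
  imports "HOL-Analysis.Analysis"
begin

definition simple_graph :: "'a set \<Rightarrow> ('a \<Rightarrow> 'a \<Rightarrow> bool) \<Rightarrow> bool" where
  "simple_graph V E \<longleftrightarrow> finite V \<and> (\<forall>u v. E u v \<longrightarrow> u \<in> V \<and> v \<in> V)
     \<and> (\<forall>u v. E u v \<longrightarrow> E v u) \<and> (\<forall>u. \<not> E u u)"

definition connected_graph :: "'a set \<Rightarrow> ('a \<Rightarrow> 'a \<Rightarrow> bool) \<Rightarrow> bool" where
  "connected_graph V E \<longleftrightarrow> (\<forall>u\<in>V. \<forall>v\<in>V. E\<^sup>*\<^sup>* u v)"

definition degree :: "'a set \<Rightarrow> ('a \<Rightarrow> 'a \<Rightarrow> bool) \<Rightarrow> 'a \<Rightarrow> nat" where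
  "degree V E u = card {v \<in> V. E u v}"

definition is_clique :: "'a set \<Rightarrow> ('a \<Rightarrow> 'a \<Rightarrow> bool) \<Rightarrow> bool" where
  "is_clique V E \<longleftrightarrow> (\<forall>u\<in>V. \<forall>v\<in>V. u \<noteq> v \<longrightarrow> E u v)"

definition kdegenerate :: "'a set \<Rightarrow> ('a \<Rightarrow> 'a \<Rightarrow> bool) \<Rightarrow> ('a \<Rightarrow> int) \<Rightarrow> 'a set \<Rightarrow> bool" where
  "kdegenerate V E \<kappa> I \<longleftrightarrow> I \<subseteq> V \<and> (\<exists>xs. distinct xs \<and> set xs = I \<and>
     (\<forall>i < length xs. int (card {j. j < i \<and> E (xs ! i) (xs ! j)}) \<le> \<kappa> (xs ! i)))"

definition alpha :: "'a set \<Rightarrow> ('a \<Rightarrow> 'a \<Rightarrow> bool) \<Rightarrow> ('a \<Rightarrow> real) \<Rightarrow> ('a \<Rightarrow> int) \<Rightarrow> real" where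
  "alpha V E c \<kappa> = Max ((\<lambda>I. \<Sum>u\<in>I. c u) ` {I. kdegenerate V E \<kappa> I})"

end

(*
  Process the vertices in some order and accept a vertex when at most \<kappa> of its neighbours
  come later; read backwards, the accepted vertices form a \<kappa>-degenerate set. In a uniformly
  random order a vertex of degree d has at most \<kappa> later neighbours with probability
  (min \<kappa> d + 1) / (d + 1), so the average accepted weight is the stated sum, which is
  therefore a lower bound for alpha.

  If equality holds, every order accepts weight exactly alpha. Exchanging two adjacent vertices
  x ~ y that are followed by exactly the set P changes the accepted weight by
  [x has exactly \<kappa>(x) neighbours in P] c(x) - [y has exactly \<kappa>(y) neighbours in P] c(y),
  so these two terms agree for all such P. Choosing P inside a neighbourhood shows that
  \<kappa> = degree propagates along edges; if it holds nowhere, adjacent vertices have equal c,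
  equal \<kappa> and equal closed neighbourhoods, so a connected graph is a clique with c and
  \<kappa> constant. Conversely, in case (i) V itself is \<kappa>-degenerate, and in a clique a
  \<kappa>-degenerate set has at most \<kappa> + 1 vertices.
*)

theory Submission
  imports Defs "HOL-Combinatorics.Multiset_Permutations"
begin

lemma simple_graphD:
  assumes "simple_graph V E"
  shows "finite V" "\<not> E v v" "E u v \<Longrightarrow> E v u" "E u v \<Longrightarrow> u \<in> V" "E u v \<Longrightarrow> v \<in> V"
  using assms unfolding simple_graph_def by blast+

fun greedy :: "('a \<Rightarrow> 'a \<Rightarrow> bool) \<Rightarrow> ('a \<Rightarrow> int) \<Rightarrow> 'a list \<Rightarrow> 'a list" where
  "greedy E \<kappa> [] = []"
| "greedy E \<kappa> (x # xs) =
    (if int (card {w \<in> set xs. E x w}) \<le> \<kappa> x then x # greedy E \<kappa> xs else greedy E \<kappa> xs)"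

fun greedy_weight :: "('a \<Rightarrow> 'a \<Rightarrow> bool) \<Rightarrow> ('a \<Rightarrow> int) \<Rightarrow> ('a \<Rightarrow> real) \<Rightarrow> 'a list \<Rightarrow> real" where
  "greedy_weight E \<kappa> c [] = 0"
| "greedy_weight E \<kappa> c (x # xs) =
    greedy_weight E \<kappa> c xs + of_bool (int (card {w \<in> set xs. E x w}) \<le> \<kappa> x) * c x"

definition degenerate_order :: "('a \<Rightarrow> 'a \<Rightarrow> bool) \<Rightarrow> ('a \<Rightarrow> int) \<Rightarrow> 'a list \<Rightarrow> bool" where
  "degenerate_order E \<kappa> xs \<longleftrightarrow>
     (\<forall>i < length xs. int (card {j. j < i \<and> E (xs ! i) (xs ! j)}) \<le> \<kappa> (xs ! i))"

lemma kdegenerate_iff: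
  "kdegenerate V E \<kappa> I \<longleftrightarrow> I \<subseteq> V \<and> (\<exists>xs. distinct xs \<and> set xs = I \<and> degenerate_order E \<kappa> xs)"
  by (simp add: kdegenerate_def degenerate_order_def)

lemma degenerate_order_snoc:
  assumes "distinct zs"
  shows "degenerate_order E \<kappa> (zs @ [x]) \<longleftrightarrow>
    degenerate_order E \<kappa> zs \<and> int (card {w \<in> set zs. E x w}) \<le> \<kappa> x"
proof -
  have "card {j. j < length zs \<and> E x (zs ! j)} = card {w \<in> set zs. E x w}"
    using length_filter_conv_card[of "E x" zs] distinct_length_filter[OF assms, of "E x"]
    by (simp add: Collect_conj_eq Int_commute)
  moreover have "{j. j < length zs \<and> E x ((zs @ [x]) ! j)} = {j. j < length zs \<and> E x (zs ! j)}"
    by (auto simp: nth_append)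
  moreover have "{j. j < i \<and> E ((zs @ [x]) ! i) ((zs @ [x]) ! j)}
      = {j. j < i \<and> E (zs ! i) (zs ! j)}"
    if "i < length zs" for i
    using that by (auto simp: nth_append)
  ultimately show ?thesis
    unfolding degenerate_order_def length_append_singleton All_less_Suc nth_append_length
    by (auto simp: nth_append_left)
qed

lemma set_greedy_subset: "set (greedy E \<kappa> xs) \<subseteq> set xs"
  by (induction xs) auto

lemma distinct_greedy: "distinct xs \<Longrightarrow> distinct (greedy E \<kappa> xs)"
  by (induction xs) (use set_greedy_subset in fastforce)+

lemma greedy_weight_eq_sum:
  "distinct xs \<Longrightarrow> greedy_weight E \<kappa> c xs = (\<Sum>u\<in>set (greedy E \<kappa> xs). c u)"
proof (induction xs)
  case (Cons x xs)
  then have "x \<notin> set (greedy E \<kappa> xs)"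
    using set_greedy_subset by fastforce
  with Cons show ?case by auto
qed simp

lemma degenerate_order_rev_greedy: "distinct xs \<Longrightarrow> degenerate_order E \<kappa> (rev (greedy E \<kappa> xs))"
proof (induction xs)
  case Nil
  then show ?case by (simp add: degenerate_order_def)
next
  case (Cons x xs)
  have "card {w \<in> set (greedy E \<kappa> xs). E x w} \<le> card {w \<in> set xs. E x w}"
    by (rule card_mono) (use set_greedy_subset[of E \<kappa> xs] in auto)
  with Cons distinct_greedy[of xs E \<kappa>] show ?case
    by (simp add: degenerate_order_snoc)
qed

lemma kdegenerate_greedy:
  "xs \<in> permutations_of_set V \<Longrightarrow> kdegenerate V E \<kappa> (set (greedy E \<kappa> xs))"
  unfolding kdegenerate_iff
  using set_greedy_subset[of E \<kappa> xs] degenerate_order_rev_greedy[of xs E \<kappa>] 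
    distinct_greedy[of xs E \<kappa>] permutations_of_setD[of xs V]
  by (metis distinct_rev set_rev)

lemma greedy_weight_append_diff_cong:
  "set zs = set zs' \<Longrightarrow>
    greedy_weight E \<kappa> c (rs @ zs) - greedy_weight E \<kappa> c zs
    = greedy_weight E \<kappa> c (rs @ zs') - greedy_weight E \<kappa> c zs'"
  by (induction rs) auto

lemma greedy_weight_swap:
  assumes "E x y" "E y x" "x \<notin> set ps" "y \<notin> set ps"
  shows "greedy_weight E \<kappa> c (y # x # ps) - greedy_weight E \<kappa> c (x # y # ps)
    = of_bool (int (card {w \<in> set ps. E x w}) = \<kappa> x) * c x
      - of_bool (int (card {w \<in> set ps. E y w}) = \<kappa> y) * c y"
proof -
  have "{w \<in> set (y # ps). E x w} = insert y {w \<in> set ps. E x w}"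
    "{w \<in> set (x # ps). E y w} = insert x {w \<in> set ps. E y w}"
    using assms(1,2) by auto
  then have "card {w \<in> set (y # ps). E x w} = Suc (card {w \<in> set ps. E x w})"
    "card {w \<in> set (x # ps). E y w} = Suc (card {w \<in> set ps. E y w})"
    using assms(3,4) by simp_all
  then show ?thesis by (simp add: algebra_simps)
qed

definition accept_prob :: "int \<Rightarrow> nat \<Rightarrow> real" where
  "accept_prob k d = (of_int (min k (int d)) + 1) / (real d + 1)"

definition mean_greedy_weight ::
    "('a \<Rightarrow> 'a \<Rightarrow> bool) \<Rightarrow> ('a \<Rightarrow> int) \<Rightarrow> ('a \<Rightarrow> real) \<Rightarrow> 'a set \<Rightarrow> real" where
  "mean_greedy_weight E \<kappa> c W = (\<Sum>u\<in>W. c u * accept_prob (\<kappa> u) (degree W E u))"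

lemma accept_prob_rec:
  "0 \<le> k \<Longrightarrow>
    real d * accept_prob k (d - 1) + of_bool (int d \<le> k) = (real d + 1) * accept_prob k d"
  by (cases "d = 0") (auto simp: accept_prob_def min_def of_nat_diff)

lemma sum_accept_prob_remove:
  assumes "finite W" "u \<in> W" "\<And>v. \<not> E v v" "0 \<le> k"
  shows "(\<Sum>x\<in>W - {u}. accept_prob k (degree (W - {x}) E u)) + of_bool (int (degree W E u) \<le> k)
    = real (card W) * accept_prob k (degree W E u)"
proof -
  define N where "N = {x \<in> W. E u x}"
  define M where "M = W - {u} - N"
  have "W - {u} = N \<union> M" "N \<inter> M = {}" "finite N" "finite M"
    using assms(1-3) by (auto simp: N_def M_def)
  moreover have "degree (W - {x}) E u = card N - 1" if "x \<in> N" for x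
  proof -
    have "{w \<in> W - {x}. E u w} = N - {x}" by (auto simp: N_def)
    then show ?thesis using that \<open>finite N\<close> by (simp add: degree_def)
  qed
  moreover have "degree (W - {x}) E u = card N" if "x \<in> M" for x
  proof -
    have "{w \<in> W - {x}. E u w} = N" using that by (auto simp: N_def M_def)
    then show ?thesis by (simp add: degree_def)
  qed
  ultimately have "(\<Sum>x\<in>W - {u}. accept_prob k (degree (W - {x}) E u))
      = real (card N) * accept_prob k (card N - 1) + real (card M) * accept_prob k (card N)"
    by (simp add: sum.union_disjoint)
  moreover have "card W = Suc (card (W - {u}))"
    using card_Suc_Diff1[OF assms(1,2)] by simp
  moreover have "card (W - {u}) = card N + card M"
    using \<open>W - {u} = N \<union> M\<close> \<open>N \<inter> M = {}\<close> \<open>finite N\<close> \<open>finite M\<close>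
    by (simp add: card_Un_disjoint)
  moreover have "degree W E u = card N" by (simp add: degree_def N_def)
  ultimately show ?thesis
    using accept_prob_rec[OF assms(4), of "card N"]
    by (simp add: algebra_simps)
qed

lemma sum_mean_greedy_weight_remove:
  assumes "finite W" "\<And>v. \<not> E v v" "\<And>u. u \<in> W \<Longrightarrow> 0 \<le> \<kappa> u"
  shows "(\<Sum>x\<in>W. mean_greedy_weight E \<kappa> c (W - {x}) + of_bool (int (degree W E x) \<le> \<kappa> x) * c x)
    = real (card W) * mean_greedy_weight E \<kappa> c W"
proof -
  have "(\<Sum>x\<in>W. mean_greedy_weight E \<kappa> c (W - {x}))
      = (\<Sum>x\<in>W. \<Sum>u\<in>{u \<in> W. u \<noteq> x}. c u * accept_prob (\<kappa> u) (degree (W - {x}) E u))"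
    unfolding mean_greedy_weight_def by (intro sum.cong) (auto intro: sum.cong)
  also have "\<dots> = (\<Sum>u\<in>W. \<Sum>x\<in>{x \<in> W. u \<noteq> x}. c u * accept_prob (\<kappa> u) (degree (W - {x}) E u))"
    using assms(1) by (rule sum.swap_restrict) (use assms(1) in simp)
  also have "\<dots> = (\<Sum>u\<in>W. c u * (\<Sum>x\<in>W - {u}. accept_prob (\<kappa> u) (degree (W - {x}) E u)))"
    by (intro sum.cong) (auto simp: sum_distrib_left intro!: sum.cong)
  finally have "(\<Sum>x\<in>W. mean_greedy_weight E \<kappa> c (W - {x})
        + of_bool (int (degree W E x) \<le> \<kappa> x) * c x)
      = (\<Sum>u\<in>W. c u * ((\<Sum>x\<in>W - {u}. accept_prob (\<kappa> u) (degree (W - {x}) E u))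
                       + of_bool (int (degree W E u) \<le> \<kappa> u)))"
    by (simp add: sum.distrib distrib_left mult.commute)
  also have "\<dots> = (\<Sum>u\<in>W. real (card W) * (c u * accept_prob (\<kappa> u) (degree W E u)))"
    using sum_accept_prob_remove[of W _ E] assms by (intro sum.cong) auto
  finally show ?thesis
    by (simp add: mean_greedy_weight_def sum_distrib_left)
qed

lemma sum_permutations_of_set_nonempty:
  assumes "finite A" "A \<noteq> {}"
  shows "(\<Sum>xs\<in>permutations_of_set A. f xs) = (\<Sum>x\<in>A. \<Sum>ys\<in>permutations_of_set (A - {x}). f (x # ys))"
proof -
  have "(\<Sum>xs\<in>permutations_of_set A. f xs)
      = (\<Sum>x\<in>A. \<Sum>xs\<in>(#) x ` permutations_of_set (A - {x}). f xs)"
    unfolding permutations_of_set_nonempty[OF assms(2)] using assms(1)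
    by (intro sum.UNION_disjoint) auto
  also have "\<dots> = (\<Sum>x\<in>A. \<Sum>ys\<in>permutations_of_set (A - {x}). f (x # ys))"
    by (rule sum.cong[OF refl], subst sum.reindex) (auto simp: inj_on_def)
  finally show ?thesis .
qed

lemma sum_greedy_weight_permutations:
  assumes "finite W" "\<And>v. \<not> E v v" "\<And>u. u \<in> W \<Longrightarrow> 0 \<le> \<kappa> u"
  shows "(\<Sum>xs\<in>permutations_of_set W. greedy_weight E \<kappa> c xs)
    = fact (card W) * mean_greedy_weight E \<kappa> c W"
  using assms(1,3)
proof (induction "card W" arbitrary: W)
  case 0
  then show ?case by (simp add: mean_greedy_weight_def)
next
  case (Suc n)
  let ?gain = "\<lambda>x. of_bool (int (degree W E x) \<le> \<kappa> x) * c x"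
  have "W \<noteq> {}"
    using Suc.hyps(2) by auto
  have card_remove: "card (W - {x}) = n" if "x \<in> W" for x
    using Suc that by simp
  then have "card (permutations_of_set (W - {x})) = fact n" if "x \<in> W" for x
    using Suc.prems(1) that by simp
  moreover have "greedy_weight E \<kappa> c (x # ys) = greedy_weight E \<kappa> c ys + ?gain x"
    if "ys \<in> permutations_of_set (W - {x})" for x ys
  proof -
    have "{w \<in> set ys. E x w} = {w \<in> W. E x w}"
      using that assms(2) by (auto simp: permutations_of_set_def)
    then show ?thesis by (simp add: degree_def)
  qed
  moreover have "(\<Sum>ys\<in>permutations_of_set (W - {x}). greedy_weight E \<kappa> c ys)
      = fact n * mean_greedy_weight E \<kappa> c (W - {x})" if "x \<in> W" for x
    using Suc.hyps(1)[of "W - {x}"] Suc.prems card_remove[OF that] by simp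
  ultimately have "(\<Sum>xs\<in>permutations_of_set W. greedy_weight E \<kappa> c xs)
      = (\<Sum>x\<in>W. fact n * mean_greedy_weight E \<kappa> c (W - {x}) + fact n * ?gain x)"
    by (simp add: sum_permutations_of_set_nonempty[OF Suc.prems(1) \<open>W \<noteq> {}\<close>] sum.distrib
        del: greedy_weight.simps)
  also have "\<dots> = fact n * (\<Sum>x\<in>W. mean_greedy_weight E \<kappa> c (W - {x}) + ?gain x)"
    by (simp add: sum_distrib_left distrib_left)
  also have "\<dots> = fact (card W) * mean_greedy_weight E \<kappa> c W"
    using sum_mean_greedy_weight_remove[of W E \<kappa> c] assms(2) Suc.prems
    by (simp add: algebra_simps flip: Suc.hyps(2))
  finally show ?case .
qed

lemma finite_kdegenerate_sets: "finite V \<Longrightarrow> finite {I. kdegenerate V E \<kappa> I}"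
  by (rule finite_subset[of _ "Pow V"]) (auto simp: kdegenerate_def)

lemma kdegenerate_le_alpha:
  "finite V \<Longrightarrow> kdegenerate V E \<kappa> I \<Longrightarrow> (\<Sum>u\<in>I. c u) \<le> alpha V E c \<kappa>"
  unfolding alpha_def by (intro Max_ge) (auto simp: finite_kdegenerate_sets)

lemma alpha_attained:
  assumes "finite V"
  obtains I where "kdegenerate V E \<kappa> I" "alpha V E c \<kappa> = (\<Sum>u\<in>I. c u)"
proof -
  have "kdegenerate V E \<kappa> {}"
    by (simp add: kdegenerate_iff degenerate_order_def)
  then have "alpha V E c \<kappa> \<in> (\<lambda>I. \<Sum>u\<in>I. c u) ` {I. kdegenerate V E \<kappa> I}"
    unfolding alpha_def using assms by (intro Max_in) (auto simp: finite_kdegenerate_sets)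
  then show ?thesis
    using that by blast
qed

lemma greedy_weight_le_alpha:
  "finite V \<Longrightarrow> xs \<in> permutations_of_set V \<Longrightarrow> greedy_weight E \<kappa> c xs \<le> alpha V E c \<kappa>"
  using kdegenerate_le_alpha[OF _ kdegenerate_greedy] greedy_weight_eq_sum
  by (metis permutations_of_setD(2))

lemma mean_greedy_weight_le_alpha:
  assumes "simple_graph V E" "\<And>u. u \<in> V \<Longrightarrow> 0 \<le> \<kappa> u"
  shows "mean_greedy_weight E \<kappa> c V \<le> alpha V E c \<kappa>"
proof -
  have "finite V"
    by (rule simple_graphD(1)[OF assms(1)])
  have "fact (card V) * mean_greedy_weight E \<kappa> c V
      = (\<Sum>xs\<in>permutations_of_set V. greedy_weight E \<kappa> c xs)"
    using sum_greedy_weight_permutations[of V E \<kappa> c] \<open>finite V\<close> simple_graphD(2)[OF assms(1)]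
      assms(2) by simp
  also have "\<dots> \<le> fact (card V) * alpha V E c \<kappa>"
    using sum_mono[of "permutations_of_set V" _ "\<lambda>_. alpha V E c \<kappa>"]
      greedy_weight_le_alpha[OF \<open>finite V\<close>] \<open>finite V\<close> by simp
  finally show ?thesis by simp
qed

lemma greedy_weight_eq_alpha:
  assumes "simple_graph V E" "\<And>u. u \<in> V \<Longrightarrow> 0 \<le> \<kappa> u"
    and "alpha V E c \<kappa> = mean_greedy_weight E \<kappa> c V" and "xs \<in> permutations_of_set V"
  shows "greedy_weight E \<kappa> c xs = alpha V E c \<kappa>"
proof -
  have "finite V"
    by (rule simple_graphD(1)[OF assms(1)])
  have "(\<Sum>ys\<in>permutations_of_set V. alpha V E c \<kappa> - greedy_weight E \<kappa> c ys) = 0"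
    using sum_greedy_weight_permutations[of V E \<kappa> c] \<open>finite V\<close> simple_graphD(2)[OF assms(1)]
      assms(2,3) by (simp add: sum_subtractf)
  moreover have "\<forall>ys\<in>permutations_of_set V. 0 \<le> alpha V E c \<kappa> - greedy_weight E \<kappa> c ys"
    using greedy_weight_le_alpha[OF \<open>finite V\<close>] by simp
  ultimately show ?thesis
    using assms(4) \<open>finite V\<close> by (simp add: sum_nonneg_eq_0_iff)
qed

locale greedy_invariant_graph =
  fixes V :: "'a set" and E :: "'a \<Rightarrow> 'a \<Rightarrow> bool" and c :: "'a \<Rightarrow> real" and \<kappa> :: "'a \<Rightarrow> int"
  assumes simple: "simple_graph V E"
    and c_pos: "\<And>u. u \<in> V \<Longrightarrow> 0 < c u"
    and kappa_nonneg: "\<And>u. u \<in> V \<Longrightarrow> 0 \<le> \<kappa> u"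
    and kappa_le_degree: "\<And>u. u \<in> V \<Longrightarrow> \<kappa> u \<le> int (degree V E u)"
    and greedy_weight_invariant: "\<And>xs ys. xs \<in> permutations_of_set V \<Longrightarrow> ys \<in> permutations_of_set V
      \<Longrightarrow> greedy_weight E \<kappa> c xs = greedy_weight E \<kappa> c ys"
begin

lemmas finite_V = simple_graphD(1)[OF simple]
  and edge_irrefl = simple_graphD(2)[OF simple]
  and edge_sym = simple_graphD(3)[OF simple]
  and edge_in_V = simple_graphD(4,5)[OF simple]

lemma finite_neighbours: "finite {w \<in> V. E x w}"
  using finite_V by simp

lemma swap_balance:
  assumes "E x y" "P \<subseteq> V - {x, y}"
  shows "of_bool (int (card {w \<in> P. E x w}) = \<kappa> x) * c x
    = of_bool (int (card {w \<in> P. E y w}) = \<kappa> y) * c y"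
proof -
  have "finite P"
    using finite_subset[OF assms(2)] finite_V by simp
  then obtain ps where ps: "set ps = P" "distinct ps"
    using finite_distinct_list by blast
  obtain rs where rs: "set rs = V - {x, y} - P" "distinct rs"
    using finite_distinct_list[of "V - {x, y} - P"] finite_V by auto
  have "x \<noteq> y" "x \<in> V" "y \<in> V"
    using assms(1) edge_irrefl edge_in_V by auto
  then have "rs @ y # x # ps \<in> permutations_of_set V" "rs @ x # y # ps \<in> permutations_of_set V"
    by (intro permutations_of_setI; use ps rs assms(2) in auto)+
  then have "greedy_weight E \<kappa> c (rs @ y # x # ps) = greedy_weight E \<kappa> c (rs @ x # y # ps)"
    by (rule greedy_weight_invariant)
  moreover have "set (y # x # ps) = set (x # y # ps)"
    by auto
  ultimately have "greedy_weight E \<kappa> c (y # x # ps) = greedy_weight E \<kappa> c (x # y # ps)"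
    using greedy_weight_append_diff_cong[of "y # x # ps" "x # y # ps" E \<kappa> c rs] by simp
  moreover have "x \<notin> set ps" "y \<notin> set ps"
    using ps assms(2) by auto
  ultimately show ?thesis
    using greedy_weight_swap[of E x y ps \<kappa> c] assms(1) edge_sym ps(1) by simp
qed

lemma neighbour_count_transfer:
  assumes "E x y" "P \<subseteq> V - {x, y}" "int (card {w \<in> P. E x w}) = \<kappa> x"
  shows "int (card {w \<in> P. E y w}) = \<kappa> y" "c x = c y"
proof -
  have "of_bool (int (card {w \<in> P. E y w}) = \<kappa> y) * c y = c x"
    using swap_balance[OF assms(1,2)] assms(3) by simp
  moreover have "0 < c x"
    using c_pos edge_in_V(1)[OF assms(1)] by blast
  ultimately show "int (card {w \<in> P. E y w}) = \<kappa> y" "c x = c y"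
    by (auto simp: of_bool_def split: if_splits)
qed

lemma neighbour_subset_of_card:
  assumes "E x y" "\<kappa> x < int (degree V E x)"
  obtains P where "P \<subseteq> {w \<in> V. E x w} - {y}" "int (card P) = \<kappa> x" "P \<subseteq> V - {x, y}"
proof -
  have "x \<in> V" "y \<in> {w \<in> V. E x w}"
    using assms(1) edge_in_V by auto
  then have "nat (\<kappa> x) \<le> card ({w \<in> V. E x w} - {y})"
    using assms(2) kappa_nonneg finite_neighbours by (simp add: degree_def)
  then obtain P where "P \<subseteq> {w \<in> V. E x w} - {y}" "card P = nat (\<kappa> x)"
    by (meson obtain_subset_with_card_n)
  moreover have "P \<subseteq> V - {x, y}"
    using calculation(1) edge_irrefl by auto
  ultimately show ?thesis
    using that kappa_nonneg[OF \<open>x \<in> V\<close>] by auto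
qed

lemma full_degree_edge:
  assumes "E x y" "\<kappa> x = int (degree V E x)"
  shows "\<kappa> y = int (degree V E y)"
proof (rule ccontr)
  assume "\<kappa> y \<noteq> int (degree V E y)"
  then have "\<kappa> y < int (degree V E y)"
    using kappa_le_degree[OF edge_in_V(2)[OF assms(1)]] by simp
  then obtain P where P: "P \<subseteq> {w \<in> V. E y w} - {x}" "int (card P) = \<kappa> y" "P \<subseteq> V - {y, x}"
    using neighbour_subset_of_card edge_sym[OF assms(1)] by blast
  then have "{w \<in> P. E y w} = P"
    by auto
  then have "int (card {w \<in> P. E x w}) = \<kappa> x"
    using neighbour_count_transfer(1)[OF edge_sym[OF assms(1)]] P by (simp add: insert_commute)
  moreover have "card {w \<in> P. E x w} < degree V E x"
  proof -
    have "{w \<in> P. E x w} \<subset> {w \<in> V. E x w}"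
      using P(3) assms(1) edge_in_V by blast
    then show ?thesis
      unfolding degree_def using finite_neighbours by (rule psubset_card_mono[rotated])
  qed
  ultimately show False
    using assms(2) by simp
qed

lemma full_degree_everywhere:
  assumes "connected_graph V E" "u \<in> V" "\<kappa> u = int (degree V E u)" "v \<in> V"
  shows "\<kappa> v = int (degree V E v)"
proof -
  have "E\<^sup>*\<^sup>* u v"
    using assms(1,2,4) by (simp add: connected_graph_def)
  then show ?thesis
  proof (induction rule: rtranclp_induct)
    case (step y z)
    then show ?case
      using full_degree_edge by blast
  qed (rule assms(3))
qed

context
  assumes deficient: "\<And>u. u \<in> V \<Longrightarrow> \<kappa> u < int (degree V E u)"
begin

lemma neighbours_subset_of_edge:
  assumes "E x y"
  shows "{w \<in> V. E y w} - {x} \<subseteq> {w \<in> V. E x w}"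
proof
  fix z
  assume z: "z \<in> {w \<in> V. E y w} - {x}"
  show "z \<in> {w \<in> V. E x w}"
  proof (rule ccontr)
    assume z_notin: "z \<notin> {w \<in> V. E x w}"
    \<comment> \<open>Adding z to P changes the number of neighbours in P of y, but not of x.\<close>
    obtain P where P: "P \<subseteq> {w \<in> V. E x w} - {y}" "int (card P) = \<kappa> x" "P \<subseteq> V - {x, y}"
      using neighbour_subset_of_card[OF assms] deficient edge_in_V(1)[OF assms] by blast
    have "z \<notin> P" and z_P: "insert z P \<subseteq> V - {x, y}"
      using z z_notin P edge_irrefl by auto
    have "{w \<in> insert z P. E x w} = P" "{w \<in> P. E x w} = P"
      using P(1) z z_notin by auto
    then have "int (card {w \<in> insert z P. E y w}) = \<kappa> y" "int (card {w \<in> P. E y w}) = \<kappa> y"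
      using neighbour_count_transfer(1)[OF assms z_P] neighbour_count_transfer(1)[OF assms P(3)] P(2) by simp_all
    moreover have "{w \<in> insert z P. E y w} = insert z {w \<in> P. E y w}"
      using z by auto
    ultimately show False
      using \<open>z \<notin> P\<close> finite_subset[OF P(3)] finite_V by simp
  qed
qed

lemma edge_constant:
  assumes "E x y"
  shows "c x = c y" "\<kappa> x = \<kappa> y" "insert x {w \<in> V. E x w} = insert y {w \<in> V. E y w}"
proof -
  obtain P where P: "P \<subseteq> {w \<in> V. E x w} - {y}" "int (card P) = \<kappa> x" "P \<subseteq> V - {x, y}"
    using neighbour_subset_of_card[OF assms] deficient edge_in_V(1)[OF assms] by blast
  have "{w \<in> P. E x w} = P"
    using P(1) by auto
  then have "int (card {w \<in> P. E y w}) = \<kappa> y" "c x = c y"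
    using neighbour_count_transfer[OF assms P(3)] P(2) by simp_all
  moreover have "{w \<in> P. E y w} = P"
    using P(1) neighbours_subset_of_edge[OF edge_sym[OF assms]] by auto
  ultimately show "c x = c y" "\<kappa> x = \<kappa> y"
    using P(2) by simp_all
  show "insert x {w \<in> V. E x w} = insert y {w \<in> V. E y w}"
    using neighbours_subset_of_edge[OF assms] neighbours_subset_of_edge[OF edge_sym[OF assms]]
      assms edge_sym edge_in_V by auto
qed

lemma constant_clique:
  assumes "connected_graph V E"
  shows "is_clique V E \<and> (\<forall>u\<in>V. \<forall>v\<in>V. c u = c v \<and> \<kappa> u = \<kappa> v)"
proof -
  have "c u = c v \<and> \<kappa> u = \<kappa> v \<and> insert u {w \<in> V. E u w} = insert v {w \<in> V. E v w}"
    if "u \<in> V" "v \<in> V" for u v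
  proof -
    have "E\<^sup>*\<^sup>* u v"
      using assms that by (simp add: connected_graph_def)
    then show ?thesis
    proof (induction rule: rtranclp_induct)
      case (step y z)
      then show ?case
        using edge_constant[OF step.hyps(2)] by simp
    qed simp
  qed
  moreover have "E u v" if "u \<in> V" "v \<in> insert u {w \<in> V. E u w}" "u \<noteq> v" for u v
    using that by simp
  ultimately show ?thesis
    unfolding is_clique_def by (metis insertI1)
qed

end

lemma full_degree_or_constant_clique:
  assumes "connected_graph V E"
  shows "(\<forall>u\<in>V. \<kappa> u = int (degree V E u))
    \<or> (is_clique V E \<and> (\<forall>u\<in>V. \<forall>v\<in>V. c u = c v \<and> \<kappa> u = \<kappa> v))"
proof (cases "\<exists>u\<in>V. \<kappa> u = int (degree V E u)")
  case True
  then obtain u where u: "u \<in> V" "\<kappa> u = int (degree V E u)"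
    by blast
  have "\<forall>v\<in>V. \<kappa> v = int (degree V E v)"
    by (rule ballI) (rule full_degree_everywhere[OF assms u])
  then show ?thesis ..
next
  case False
  have "\<kappa> u < int (degree V E u)" if "u \<in> V" for u
  proof -
    have "\<kappa> u \<noteq> int (degree V E u)"
      using False that by blast
    then show ?thesis
      using kappa_le_degree[OF that] by simp
  qed
  then have "is_clique V E \<and> (\<forall>u\<in>V. \<forall>v\<in>V. c u = c v \<and> \<kappa> u = \<kappa> v)"
    using constant_clique[OF _ assms] by blast
  then show ?thesis ..
qed

end

lemma degree_clique:
  assumes "simple_graph V E" "is_clique V E" "u \<in> V"
  shows "degree V E u = card V - 1"
proof -
  have "{w \<in> V. E u w} = V - {u}"
  proof
    show "{w \<in> V. E u w} \<subseteq> V - {u}"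
      using simple_graphD(2)[OF assms(1)] by auto
    show "V - {u} \<subseteq> {w \<in> V. E u w}"
      using assms(2,3) unfolding is_clique_def by auto
  qed
  then show ?thesis
    using simple_graphD(1)[OF assms(1)] assms(3) by (simp add: degree_def)
qed

lemma clique_kdegenerate_card_le:
  assumes "is_clique V E" "kdegenerate V E \<kappa> I" "I \<noteq> {}"
  shows "\<exists>u\<in>I. int (card I) \<le> \<kappa> u + 1"
proof -
  obtain xs where xs: "distinct xs" "set xs = I" "degenerate_order E \<kappa> xs" "I \<subseteq> V"
    using assms(2) by (auto simp: kdegenerate_iff)
  define i where "i = length xs - 1"
  have "xs \<noteq> []"
    using xs(2) assms(3) by auto
  then have i: "i < length xs" "card I = Suc i"
    using xs(2) distinct_card[OF xs(1)] by (auto simp: i_def)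
  have "E (xs ! i) (xs ! j)" if "j < i" for j
  proof -
    have "xs ! i \<noteq> xs ! j"
      using xs(1) i(1) that by (simp add: nth_eq_iff_index_eq)
    moreover have "xs ! i \<in> V" "xs ! j \<in> V"
      using xs(2,4) i(1) that nth_mem[of _ xs] by (simp_all add: subset_iff)
    ultimately show ?thesis
      using assms(1) by (simp add: is_clique_def)
  qed
  then have "{j. j < i \<and> E (xs ! i) (xs ! j)} = {j. j < i}"
    by blast
  then have "int i \<le> \<kappa> (xs ! i)"
    using xs(3) i(1) unfolding degenerate_order_def by (metis card_Collect_less_nat)
  moreover have "xs ! i \<in> I"
    using xs(2) i(1) by auto
  ultimately show ?thesis
    using i(2) by (intro bexI[of _ "xs ! i"]) simp_all
qed

lemma mean_greedy_weight_eq: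
  assumes "\<And>u. u \<in> W \<Longrightarrow> \<kappa> u \<le> int (degree W E u)"
  shows "mean_greedy_weight E \<kappa> c W
    = (\<Sum>u\<in>W. c u * (real_of_int (\<kappa> u) + 1) / (real (degree W E u) + 1))"
  unfolding mean_greedy_weight_def accept_prob_def
  using assms by (intro sum.cong) (simp_all add: min_def)

lemma alpha_le_sum:
  assumes "finite V" "\<And>u. u \<in> V \<Longrightarrow> 0 \<le> c u"
  shows "alpha V E c \<kappa> \<le> (\<Sum>u\<in>V. c u)"
proof -
  obtain I where "kdegenerate V E \<kappa> I" "alpha V E c \<kappa> = (\<Sum>u\<in>I. c u)"
    using alpha_attained[OF assms(1)] .
  moreover have "I \<subseteq> V"
    using calculation(1) by (simp add: kdegenerate_def)
  ultimately show ?thesis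
    using sum_mono2[OF assms(1)] assms(2) by auto
qed

lemma alpha_clique_le:
  assumes "simple_graph V E" "is_clique V E"
    and "\<And>u. u \<in> V \<Longrightarrow> 0 \<le> c u" "\<And>u. u \<in> V \<Longrightarrow> 0 \<le> \<kappa> u"
    and "\<forall>u\<in>V. \<forall>v\<in>V. c u = c v \<and> \<kappa> u = \<kappa> v"
  shows "alpha V E c \<kappa> \<le> (\<Sum>u\<in>V. c u * (real_of_int (\<kappa> u) + 1) / (real (degree V E u) + 1))"
proof -
  obtain I where I: "kdegenerate V E \<kappa> I" "alpha V E c \<kappa> = (\<Sum>u\<in>I. c u)"
    using alpha_attained simple_graphD(1)[OF assms(1)] by blast
  have "I \<subseteq> V"
    using I(1) by (simp add: kdegenerate_def)
  show ?thesis
  proof (cases "I = {}")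
    case True
    then show ?thesis
      using I(2) assms(3,4) by (simp add: sum_nonneg)
  next
    case False
    then obtain u where u: "u \<in> I" "int (card I) \<le> \<kappa> u + 1"
      using clique_kdegenerate_card_le[OF assms(2) I(1)] by blast
    then have "u \<in> V" "0 < card V"
      using \<open>I \<subseteq> V\<close> simple_graphD(1)[OF assms(1)] card_gt_0_iff by auto
    have same: "c v = c u" "\<kappa> v = \<kappa> u" if "v \<in> V" for v
      using bspec[OF bspec[OF assms(5) that] \<open>u \<in> V\<close>] by simp_all
    have "alpha V E c \<kappa> = (\<Sum>v\<in>I. c u)"
      unfolding I(2) using \<open>I \<subseteq> V\<close> same(1) by (intro sum.cong) auto
    also have "\<dots> \<le> (real_of_int (\<kappa> u) + 1) * c u"
      using u(2) assms(3)[OF \<open>u \<in> V\<close>] by (simp add: mult_right_mono)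
    also have "\<dots> = (\<Sum>v\<in>V. c u * (real_of_int (\<kappa> u) + 1) / real (card V))"
      using \<open>0 < card V\<close> by simp
    also have "\<dots> = (\<Sum>v\<in>V. c v * (real_of_int (\<kappa> v) + 1) / (real (degree V E v) + 1))"
      using same degree_clique[OF assms(1,2)] \<open>0 < card V\<close> by (intro sum.cong) auto
    finally show ?thesis .
  qed
qed

theorem theorem2:
  fixes V :: "'a set" and E :: "'a \<Rightarrow> 'a \<Rightarrow> bool"
    and c :: "'a \<Rightarrow> real" and \<kappa> :: "'a \<Rightarrow> int"
  assumes "simple_graph V E"
    and "connected_graph V E"
    and "\<And>u. u \<in> V \<Longrightarrow> c u > 0"
    and "\<And>u. u \<in> V \<Longrightarrow> 0 \<le> \<kappa> u \<and> \<kappa> u \<le> int (degree V E u)"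
  shows "alpha V E c \<kappa> = (\<Sum>u\<in>V. c u * (real_of_int (\<kappa> u) + 1) / (real (degree V E u) + 1))
     \<longleftrightarrow> ((\<forall>u\<in>V. \<kappa> u = int (degree V E u))
          \<or> (is_clique V E \<and> (\<forall>u\<in>V. \<forall>v\<in>V. c u = c v \<and> \<kappa> u = \<kappa> v)))"
    (is "alpha V E c \<kappa> = ?bound \<longleftrightarrow> ?full \<or> ?clique")
proof -
  have kappa_nonneg: "\<And>u. u \<in> V \<Longrightarrow> 0 \<le> \<kappa> u"
    using assms(4) by simp
  have c_nonneg: "\<And>u. u \<in> V \<Longrightarrow> 0 \<le> c u"
    using assms(3) by (simp add: less_imp_le)
  have mean: "mean_greedy_weight E \<kappa> c V = ?bound"
    using assms(4) by (intro mean_greedy_weight_eq) simp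
  have "?bound \<le> alpha V E c \<kappa>"
    using mean_greedy_weight_le_alpha[of V E \<kappa> c] assms(1) kappa_nonneg mean by simp
  show ?thesis
  proof
    assume "alpha V E c \<kappa> = ?bound"
    then have "greedy_weight E \<kappa> c xs = alpha V E c \<kappa>" if "xs \<in> permutations_of_set V" for xs
      using greedy_weight_eq_alpha[of V E \<kappa> c xs] assms(1) kappa_nonneg that mean by simp
    then interpret greedy_invariant_graph V E c \<kappa>
      using assms(1,3,4) by unfold_locales simp_all
    show "?full \<or> ?clique"
      using full_degree_or_constant_clique[OF assms(2)] .
  next
    assume "?full \<or> ?clique"
    then have "alpha V E c \<kappa> \<le> ?bound"
    proof
      assume ?full
      then show ?thesis
        using alpha_le_sum[OF simple_graphD(1)[OF assms(1)] c_nonneg] by simp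
    next
      assume ?clique
      then show ?thesis
        using alpha_clique_le[of V E c \<kappa>, OF assms(1) _ c_nonneg kappa_nonneg] by blast
    qed
    with \<open>?bound \<le> alpha V E c \<kappa>\<close> show "alpha V E c \<kappa> = ?bound"
      by simp
  qed
qed

end
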